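(* Let $K,L,T,r$ be positive integers with $L\le K$ and $1\le r\le\min\{K,T\}$, and let $(\alpha,\beta)$ be the $\mathsf{GASP}_r$ vectors. For $1\le i\le T$ let $P_i=\{\alpha_k+\beta_c: 1\le k\le K+i-1,\ 1\le c\le L+T\}$, $L_i=((\alpha_{\mathrm s})_i+\operatorname{Set}(\beta_{\mathrm p}))\cap P_i$ and $R_i=((\alpha_{\mathrm s})_i+\operatorname{Set}(\beta_{\mathrm s}))\cap P_i$. Then $|L_i|=\min\{L,2+\lfloor (T-1-i)/K\rfloor\}$ if $1\le i\le r$, and $|L_i|=L$ if $r+1\le i\le T$; and $|R_i|=\max\{0,K+T-KL-1\}$ if $i=1$, $|R_i|=\max\{0,T-K+r-1\}$ if $i\ge2$ and $i\equiv1\pmod r$, and $|R_i|=T-1$ if $i\not\equiv1\pmod r$.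
   Context: The code $\mathsf{GASP}_r$ ($L\le K$, $1\le r\le\min\{K,T\}$) consists of the vectors $\alpha=(\alpha_{\mathrm p}\mid\alpha_{\mathrm s})$ (entries $\alpha_1,\ldots,\alpha_{K+T}$) and $\beta=(\beta_{\mathrm p}\mid\beta_{\mathrm s})$ (entries $\beta_1,\ldots,\beta_{L+T}$) with $\alpha_{\mathrm p}=(0,1,\ldots,K-1)$; $\alpha_{\mathrm s}$ the $T$ smallest elements of $\{KL+j+Kt: 0\le j\le r-1,\ t\in\mathbb{Z}_{\ge0}\}$ in increasing order (so $(\alpha_{\mathrm s})_i=\alpha_{K+i}$); $\beta_{\mathrm p}=(0,K,\ldots,K(L-1))$; $\beta_{\mathrm s}=(KL,\ldots,KL+T-1)$. $\operatorname{Set}(v)$ is the set of entries of $v$ and $x+B=\{x+b:b\in B\}$. (Thus $L_i$, $R_i$ are the integers in the first $L$, resp. last $T$, entries of row $K+i$ of the table $(\alpha_k+\beta_c)_{k,c}$ that already appear in its first $K+i-1$ rows.) *)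

theory Defs
  imports Main "HOL-Library.Infinite_Set"
begin

text \<open>The set from which the secret part of alpha is drawn:
  {KL + j + K t : 0 \<le> j \<le> r-1, t \<ge> 0}.\<close>
definition gasp_S :: "nat \<Rightarrow> nat \<Rightarrow> nat \<Rightarrow> nat set" where
  "gasp_S K L r = {K*L + j + K*t | j t. j \<le> r - 1}"

text \<open>alpha, 1-indexed: alpha_k = k-1 for 1 \<le> k \<le> K, and alpha_(K+i) is the
  i-th smallest element of gasp_S (i \<ge> 1).\<close>
definition gasp_alpha :: "nat \<Rightarrow> nat \<Rightarrow> nat \<Rightarrow> nat \<Rightarrow> nat \<Rightarrow> nat" where
  "gasp_alpha K L T r k =
     (if k \<le> K then k - 1 else enumerate (gasp_S K L r) (k - K - 1))"

definition gasp_beta :: "nat \<Rightarrow> nat \<Rightarrow> nat \<Rightarrow> nat \<Rightarrow> nat" where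
  "gasp_beta K L T c = (if c \<le> L then K * (c - 1) else K * L + (c - L - 1))"

definition gasp_P :: "nat \<Rightarrow> nat \<Rightarrow> nat \<Rightarrow> nat \<Rightarrow> nat \<Rightarrow> nat set" where
  "gasp_P K L T r i = {gasp_alpha K L T r k + gasp_beta K L T c | k c.
       1 \<le> k \<and> k \<le> K + i - 1 \<and> 1 \<le> c \<and> c \<le> L + T}"

definition gasp_Lset :: "nat \<Rightarrow> nat \<Rightarrow> nat \<Rightarrow> nat \<Rightarrow> nat \<Rightarrow> nat set" where
  "gasp_Lset K L T r i =
     ((\<lambda>b. gasp_alpha K L T r (K + i) + b) ` (gasp_beta K L T ` {1..L}))
     \<inter> gasp_P K L T r i"

definition gasp_Rset :: "nat \<Rightarrow> nat \<Rightarrow> nat \<Rightarrow> nat \<Rightarrow> nat \<Rightarrow> nat set" where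
  "gasp_Rset K L T r i =
     ((\<lambda>b. gasp_alpha K L T r (K + i) + b) ` (gasp_beta K L T ` {L+1..L+T}))
     \<inter> gasp_P K L T r i"

end

theory Submission
  imports Defs
begin

text \<open>The secret exponents are \<open>\<alpha>(K + 1 + n) = s n\<close> with
  \<open>s n = KL + n mod r + K (n div r)\<close>: they grow by 1 inside a block of \<open>r\<close>
  consecutive indices, by \<open>K + 1 - r\<close> from one block to the next, and
  \<open>s (n + r) = s n + K\<close>. The first \<open>K\<close> rows of the table \<open>\<alpha>(k) + \<beta>(c)\<close>
  fill the interval \<open>[0, KL + K + T - 2]\<close>, so \<open>P i\<close> is this interval together
  with the rows of \<open>s 0, \<dots>, s (i - 2)\<close>.

  For \<open>i \<le> r\<close> the entries \<open>KL + i - 1 + Kc\<close> of \<open>L i\<close> avoid the earlier secret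
  rows (their residue modulo \<open>K\<close> differs from that of the data parts, and they lie
  below the secret parts), so only the interval contributes.
  For \<open>i > r\<close> the identity \<open>s (i - 1) = s (i - 1 - r) + K\<close> moves the whole data
  part of row \<open>K + i\<close> into row \<open>K + i - r\<close>. An entry \<open>s (i - 1) + KL + m\<close> of
  \<open>R i\<close> (\<open>i \<ge> 2\<close>) lies in \<open>P i\<close> iff it lies in the secret part of the row of
  \<open>s (i - 2)\<close>, i.e. iff \<open>m + (s (i - 1) - s (i - 2)) < T\<close>.\<close>

lemma enumerate_range_strict_mono:
  assumes "strict_mono (f :: nat \<Rightarrow> nat)"
  shows "enumerate (range f) n = f n"
proof (induction n)
  case 0
  show ?case unfolding enumerate_0
    by (rule Least_equality) (auto simp: strict_mono_less_eq[OF assms])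
next
  case (Suc n)
  have inf: "infinite (range f)"
    using strict_mono_imp_inj_on[OF assms] finite_imageD by blast
  show ?case unfolding enumerate_Suc''[OF inf] Suc
    by (rule Least_equality) (auto simp: strict_mono_less[OF assms] strict_mono_less_eq[OF assms] Suc_le_eq)
qed

lemma card_image_Int:
  assumes "inj f"
  shows "card (f ` A \<inter> B) = card {a\<in>A. f a \<in> B}"
proof -
  have "f ` A \<inter> B = f ` {a\<in>A. f a \<in> B}" by blast
  then show ?thesis using assms by (simp add: card_image inj_on_subset)
qed

definition gasp_secret :: "nat \<Rightarrow> nat \<Rightarrow> nat \<Rightarrow> nat \<Rightarrow> nat" where
  "gasp_secret K L r n = K*L + n mod r + K*(n div r)"

lemma gasp_secret_Suc:
  assumes "1 \<le> r" "r \<le> K"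
  shows "gasp_secret K L r (Suc n) = gasp_secret K L r n + (if Suc n mod r = 0 then K + 1 - r else 1)"
proof -
  have "n mod r < r" using assms by simp
  then show ?thesis using assms
    by (auto simp: gasp_secret_def div_Suc mod_Suc algebra_simps)
qed

lemma strict_mono_gasp_secret:
  assumes "1 \<le> r" "r \<le> K"
  shows "strict_mono (gasp_secret K L r)"
  unfolding strict_mono_Suc_iff using gasp_secret_Suc[OF assms] assms by simp

lemma gasp_secret_add_period:
  assumes "1 \<le> r"
  shows "gasp_secret K L r (n + r) = gasp_secret K L r n + K"
  using assms by (simp add: gasp_secret_def div_add_self2)

lemma gasp_secret_below_period: "n < r \<Longrightarrow> gasp_secret K L r n = K*L + n"
  by (simp add: gasp_secret_def)

lemma gasp_secret_ge: "K*L \<le> gasp_secret K L r n"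
  by (simp add: gasp_secret_def)

lemma gasp_S_eq_range:
  assumes "1 \<le> r"
  shows "gasp_S K L r = range (gasp_secret K L r)"
proof (intro equalityI subsetI)
  fix x assume "x \<in> gasp_S K L r"
  then obtain j t where "x = K*L + j + K*t" "j < r"
    using assms unfolding gasp_S_def by force
  then have "x = gasp_secret K L r (t*r + j)" by (simp add: gasp_secret_def)
  then show "x \<in> range (gasp_secret K L r)" by blast
next
  fix x assume "x \<in> range (gasp_secret K L r)"
  then obtain n where "x = gasp_secret K L r n" by blast
  moreover have "n mod r \<le> r - 1" using assms by (simp add: less_Suc_eq_le[symmetric])
  ultimately show "x \<in> gasp_S K L r" unfolding gasp_S_def gasp_secret_def by blast
qed

lemma gasp_alpha_secret:
  assumes "1 \<le> r" "r \<le> K" "1 \<le> j"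
  shows "gasp_alpha K L T r (K + j) = gasp_secret K L r (j - 1)"
  using assms by (simp add: gasp_alpha_def gasp_S_eq_range enumerate_range_strict_mono strict_mono_gasp_secret)

lemma gasp_beta_image_data: "gasp_beta K L T ` {1..L} = (\<lambda>c. K*c) ` {..<L}"
proof (intro equalityI subsetI)
  fix y assume "y \<in> gasp_beta K L T ` {1..L}"
  then obtain c where "c \<in> {1..L}" "y = K*(c-1)" by (auto simp: gasp_beta_def)
  then show "y \<in> (\<lambda>c. K*c) ` {..<L}" by (intro image_eqI[of _ _ "c-1"]) auto
next
  fix y assume "y \<in> (\<lambda>c. K*c) ` {..<L}"
  then obtain c where "c < L" "y = K*c" by auto
  then show "y \<in> gasp_beta K L T ` {1..L}"
    by (intro image_eqI[of _ _ "c+1"]) (auto simp: gasp_beta_def)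
qed

lemma gasp_beta_image_secret: "gasp_beta K L T ` {L+1..L+T} = (\<lambda>m. K*L + m) ` {..<T}"
proof (intro equalityI subsetI)
  fix y assume "y \<in> gasp_beta K L T ` {L+1..L+T}"
  then obtain c where "c \<in> {L+1..L+T}" "y = K*L + (c - L - 1)" by (auto simp: gasp_beta_def)
  then show "y \<in> (\<lambda>m. K*L + m) ` {..<T}" by (intro image_eqI[of _ _ "c-L-1"]) auto
next
  fix y assume "y \<in> (\<lambda>m. K*L + m) ` {..<T}"
  then obtain m where "m < T" "y = K*L + m" by auto
  then show "y \<in> gasp_beta K L T ` {L+1..L+T}"
    by (intro image_eqI[of _ _ "L+1+m"]) (auto simp: gasp_beta_def)
qed

definition gasp_row :: "nat \<Rightarrow> nat \<Rightarrow> nat \<Rightarrow> nat \<Rightarrow> nat set" where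
  "gasp_row K L T a = (\<lambda>c. a + K*c) ` {..<L} \<union> (\<lambda>m. a + K*L + m) ` {..<T}"

lemma mem_gasp_row:
  "x \<in> gasp_row K L T a \<longleftrightarrow> (\<exists>c<L. x = a + K*c) \<or> (\<exists>m<T. x = a + K*L + m)"
  unfolding gasp_row_def by blast

lemma gasp_row_eq_beta: "gasp_row K L T a = (\<lambda>c. a + gasp_beta K L T c) ` {1..L+T}"
proof -
  have "{1..L+T} = {1..L} \<union> {L+1..L+T}" by auto
  then have "(\<lambda>c. a + gasp_beta K L T c) ` {1..L+T}
      = (\<lambda>b. a + b) ` (gasp_beta K L T ` {1..L} \<union> gasp_beta K L T ` {L+1..L+T})"
    by (simp add: image_Un image_image)
  then show ?thesis
    unfolding gasp_beta_image_data gasp_beta_image_secret gasp_row_def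
    by (simp add: image_Un image_image add.assoc)
qed

lemma UN_gasp_row_lessThan:
  assumes "0 < K" "0 < T"
  shows "(\<Union>a<K. gasp_row K L T a) = {..<K*L+K+T-1}"
proof (intro equalityI subsetI)
  fix x assume "x \<in> (\<Union>a<K. gasp_row K L T a)"
  then obtain a where a: "a < K" and "x \<in> gasp_row K L T a" by blast
  then consider c where "c < L" "x = a + K*c" | m where "m < T" "x = a + K*L + m"
    unfolding mem_gasp_row by blast
  then show "x \<in> {..<K*L+K+T-1}"
  proof cases
    case 1
    then have "K*c + K \<le> K*L" by (metis Suc_leI mult_Suc_right mult_le_mono2 add.commute)
    then show ?thesis using 1 a assms by simp
  qed (use a in simp)
next
  fix x assume x: "x \<in> {..<K*L+K+T-1}"
  show "x \<in> (\<Union>a<K. gasp_row K L T a)"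
  proof (cases "x < K*L")
    case True
    then have "x div K < L" using assms(1) by (simp add: div_less_iff_less_mult mult.commute)
    moreover have "x = x mod K + K*(x div K)" by simp
    ultimately have "x \<in> gasp_row K L T (x mod K)" unfolding mem_gasp_row by blast
    then show ?thesis using assms by auto
  next
    case False
    define a where "a = min (x - K*L) (K - 1)"
    have "x = a + K*L + (x - K*L - a)" "x - K*L - a < T"
      using False x assms unfolding a_def by auto
    then have "x \<in> gasp_row K L T a" unfolding mem_gasp_row by blast
    then show ?thesis using assms unfolding a_def by auto
  qed
qed

lemma gasp_P_eq_UN:
  "gasp_P K L T r i = (\<Union>k\<in>{1..K+i-1}. gasp_row K L T (gasp_alpha K L T r k))"
  unfolding gasp_P_def gasp_row_eq_beta by (auto simp: image_iff) (use atLeastAtMost_iff in blast)+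

lemma atLeastAtMost_1_split:
  assumes "1 \<le> i"
  shows "{1..K+i-1} = Suc ` {..<K} \<union> (\<lambda>j. K + Suc j) ` {..<i-1}"
proof (intro equalityI subsetI)
  fix k assume "k \<in> {1..K+i-1}"
  then show "k \<in> Suc ` {..<K} \<union> (\<lambda>j. K + Suc j) ` {..<i-1}"
  proof (cases "k \<le> K")
    case True
    then have "k = Suc (k - 1)" "k - 1 < K" using \<open>k \<in> {1..K+i-1}\<close> by auto
    then show ?thesis by blast
  next
    case False
    then have "k = K + Suc (k - K - 1)" "k - K - 1 < i - 1" using \<open>k \<in> {1..K+i-1}\<close> by auto
    then show ?thesis by blast
  qed
qed (use assms in auto)

lemma gasp_P_eq:
  assumes "0 < K" "0 < T" "1 \<le> r" "r \<le> K" "1 \<le> i"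
  shows "gasp_P K L T r i
    = {..<K*L+K+T-1} \<union> (\<Union>j<i-1. gasp_row K L T (gasp_secret K L r j))"
proof -
  have data: "(\<Union>a<K. gasp_row K L T (gasp_alpha K L T r (Suc a))) = {..<K*L+K+T-1}"
    unfolding UN_gasp_row_lessThan[OF assms(1,2), symmetric]
    by (rule SUP_cong) (simp_all add: gasp_alpha_def)
  have secret: "gasp_alpha K L T r (Suc (K + j)) = gasp_secret K L r j" for j
    using gasp_alpha_secret[OF assms(3,4), of "Suc j"] by simp
  show ?thesis
    unfolding gasp_P_eq_UN atLeastAtMost_1_split[OF assms(5)] UN_Un image_image
    by (simp add: data secret)
qed

lemma card_gasp_Lset:
  assumes "0 < K" "1 \<le> r" "r \<le> K" "1 \<le> i"
  shows "card (gasp_Lset K L T r i)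
    = card {c\<in>{..<L}. gasp_secret K L r (i-1) + K*c \<in> gasp_P K L T r i}"
proof -
  have "inj (\<lambda>c. gasp_secret K L r (i-1) + K*c)" using assms(1) by (auto intro: injI)
  then show ?thesis
    unfolding gasp_Lset_def gasp_beta_image_data gasp_alpha_secret[OF assms(2-4)]
    by (simp add: image_image card_image_Int)
qed

lemma card_gasp_Rset:
  assumes "1 \<le> r" "r \<le> K" "1 \<le> i"
  shows "card (gasp_Rset K L T r i)
    = card {m\<in>{..<T}. gasp_secret K L r (i-1) + K*L + m \<in> gasp_P K L T r i}"
proof -
  have "inj (\<lambda>m. gasp_secret K L r (i-1) + K*L + m)" by (auto intro: injI)
  then show ?thesis
    unfolding gasp_Rset_def gasp_beta_image_secret gasp_alpha_secret[OF assms]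
    by (simp add: image_image card_image_Int add.assoc)
qed

lemma card_gasp_Lset_initial:
  assumes "0 < K" "0 < T" "1 \<le> r" "r \<le> K" "1 \<le> i" "i \<le> r" "i \<le> T"
  shows "card (gasp_Lset K L T r i) = min L ((K+T-1-i) div K + 1)"
proof -
  have secret: "gasp_secret K L r j = K*L + j" if "j < i" for j
    using that assms(6) by (simp add: gasp_secret_below_period)
  have fresh: "K*L + (i-1) + K*c \<notin> gasp_row K L T (K*L + j)" if "c < L" "j < i-1" for c j
  proof
    assume "K*L + (i-1) + K*c \<in> gasp_row K L T (K*L + j)"
    then consider c' where "(i-1) + K*c = j + K*c'" | m where "(i-1) + K*c = j + K*L + m"
      unfolding mem_gasp_row by force
    then show False
    proof cases
      case 1
      then have "(i-1) mod K = j mod K" by (metis mod_mult_self2)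
      then show False using that(2) assms(4,6) by simp
    next
      case 2
      have "K*c + K \<le> K*L" using that(1) by (metis Suc_leI mult_Suc_right mult_le_mono2 add.commute)
      then show False using 2 assms(4-6) by linarith
    qed
  qed
  have "K*L + (i-1) + K*c \<in> gasp_P K L T r i \<longleftrightarrow> c \<le> (K+T-1-i) div K" if "c < L" for c
  proof -
    have "K*L + (i-1) + K*c \<in> gasp_P K L T r i \<longleftrightarrow> K*L + (i-1) + K*c < K*L+K+T-1"
      using fresh[OF that] secret assms by (auto simp: gasp_P_eq)
    also have "\<dots> \<longleftrightarrow> K*c \<le> K+T-1-i" using assms(1,5,7) by linarith
    also have "\<dots> \<longleftrightarrow> c \<le> (K+T-1-i) div K"
      using assms(1) by (simp add: less_eq_div_iff_mult_less_eq mult.commute)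
    finally show ?thesis .
  qed
  then have "{c\<in>{..<L}. gasp_secret K L r (i-1) + K*c \<in> gasp_P K L T r i}
      = {..<min L ((K+T-1-i) div K + 1)}"
    using secret[of "i-1"] assms(5) by auto
  then show ?thesis using card_gasp_Lset assms by simp
qed

lemma card_gasp_Lset_later:
  assumes "0 < K" "0 < T" "1 \<le> r" "r \<le> K" "r < i"
  shows "card (gasp_Lset K L T r i) = L"
proof -
  define j where "j = i - 1 - r"
  have shift: "gasp_secret K L r (i-1) = gasp_secret K L r j + K"
    using gasp_secret_add_period[OF assms(3), where n = j] assms(5) unfolding j_def by simp
  have "gasp_secret K L r (i-1) + K*c \<in> gasp_row K L T (gasp_secret K L r j)" if "c < L" for c
  proof (cases "c + 1 < L")
    case True
    then show ?thesis unfolding mem_gasp_row shift by (intro disjI1 exI[of _ "c+1"]) simp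
  next
    case False
    then have "L = Suc c" using that by simp
    then show ?thesis unfolding mem_gasp_row shift using assms(2)
      by (intro disjI2 exI[of _ 0]) simp
  qed
  moreover have "j < i - 1" using assms unfolding j_def by simp
  ultimately have "{c\<in>{..<L}. gasp_secret K L r (i-1) + K*c \<in> gasp_P K L T r i} = {..<L}"
    using assms by (auto simp: gasp_P_eq)
  then show ?thesis using card_gasp_Lset assms by simp
qed

lemma card_gasp_Rset_first:
  assumes "0 < K" "0 < T" "0 < L" "1 \<le> r" "r \<le> K"
  shows "card (gasp_Rset K L T r 1) = K + T - (K*L + 1)"
proof -
  have "K \<le> K*L" using assms(3) by simp
  then have "K + T - (K*L + 1) < T" using assms(2) by linarith
  then have "{m\<in>{..<T}. gasp_secret K L r 0 + K*L + m \<in> gasp_P K L T r 1} = {..<K + T - (K*L + 1)}"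
    using assms by (auto simp: gasp_P_eq gasp_secret_below_period)
  then show ?thesis using card_gasp_Rset[OF assms(4,5)] by simp
qed

lemma card_gasp_Rset_later:
  assumes "0 < K" "0 < T" "0 < L" "1 \<le> r" "r \<le> K" "2 \<le> i"
  shows "card (gasp_Rset K L T r i) = T - (if i mod r = 1 mod r then K + 1 - r else 1)"
proof -
  define n where "n = i - 2"
  define d where "d = (if i mod r = 1 mod r then K + 1 - r else 1)"
  have i: "i = Suc (Suc n)" using assms(6) unfolding n_def by simp
  have "n mod r < r" using assms(4) by simp
  then have "Suc n mod r = 0 \<longleftrightarrow> i mod r = 1 mod r"
    unfolding i using assms(4) by (auto simp: mod_Suc)
  then have step: "gasp_secret K L r (i-1) = gasp_secret K L r n + d"
    unfolding d_def using gasp_secret_Suc[OF assms(4,5), of L n] i by simp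
  have "d > 0" using assms(5) unfolding d_def by simp
  have "K \<le> K*L" using assms(3) by simp
  have earlier_le: "gasp_secret K L r j \<le> gasp_secret K L r n" if "j < i - 1" for j
    using that i strict_mono_less_eq[OF strict_mono_gasp_secret[OF assms(4,5)]] by simp
  have P_i: "gasp_P K L T r i
      = {..<K*L+K+T-1} \<union> (\<Union>j<i-1. gasp_row K L T (gasp_secret K L r j))"
    using assms by (simp add: gasp_P_eq)
  have key: "gasp_secret K L r n + d + K*L + m \<in> gasp_P K L T r i \<longleftrightarrow> d + m < T" for m
  proof
    let ?x = "gasp_secret K L r n + d + K*L + m"
    assume "?x \<in> gasp_P K L T r i"
    then consider (interval) "?x < K*L+K+T-1"
      | (row) j where "j < i-1" "?x \<in> gasp_row K L T (gasp_secret K L r j)"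
      unfolding P_i by blast
    then show "d + m < T"
    proof cases
      case interval
      then show ?thesis using gasp_secret_ge[of K L r n] \<open>K \<le> K*L\<close> by linarith
    next
      case row
      then consider c where "c < L" "?x = gasp_secret K L r j + K*c"
        | m' where "m' < T" "?x = gasp_secret K L r j + K*L + m'"
        unfolding mem_gasp_row by blast
      then show ?thesis
      proof cases
        case 1
        have "K*c < K*L" using 1(1) assms(1) by simp
        then show ?thesis using 1(2) earlier_le[OF row(1)] \<open>d > 0\<close> by linarith
      next
        case 2
        then show ?thesis using earlier_le[OF row(1)] by linarith
      qed
    qed
  next
    assume "d + m < T"
    then have "gasp_secret K L r n + d + K*L + m \<in> gasp_row K L T (gasp_secret K L r n)"
      unfolding mem_gasp_row by (intro disjI2 exI[of _ "d+m"]) (simp add: algebra_simps)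
    moreover have "n < i - 1" using i by simp
    ultimately show "gasp_secret K L r n + d + K*L + m \<in> gasp_P K L T r i"
      unfolding P_i by blast
  qed
  have "{m\<in>{..<T}. gasp_secret K L r (i-1) + K*L + m \<in> gasp_P K L T r i} = {..<T - d}"
    unfolding step by (auto simp: key)
  then show ?thesis using card_gasp_Rset[OF assms(4,5)] assms(6) unfolding d_def by simp
qed

theorem lemma1:
  fixes K L T r i :: nat
  assumes "0 < K" and "0 < L" and "0 < T" and "L \<le> K"
    and "1 \<le> r" and "r \<le> min K T"
    and "1 \<le> i" and "i \<le> T"
  shows "(i \<le> r \<longrightarrow> int (card (gasp_Lset K L T r i))
              = min (int L) (2 + (int T - 1 - int i) div int K))
       \<and> (r + 1 \<le> i \<longrightarrow> card (gasp_Lset K L T r i) = L)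
       \<and> (i = 1 \<longrightarrow> int (card (gasp_Rset K L T r i))
              = max 0 (int K + int T - int K * int L - 1))
       \<and> (2 \<le> i \<and> i mod r = 1 mod r \<longrightarrow> int (card (gasp_Rset K L T r i))
              = max 0 (int T - int K + int r - 1))
       \<and> (\<not> i mod r = 1 mod r \<longrightarrow> card (gasp_Rset K L T r i) = T - 1)"
proof (intro conjI impI)
  have r: "r \<le> K" using assms(6) by simp
  note pos = assms(1,3,2,5) r
  have int_diff: "int (a - b) = max 0 (int a - int b)" for a b
    by (simp add: of_nat_diff_if)
  show "int (card (gasp_Lset K L T r i)) = min (int L) (2 + (int T - 1 - int i) div int K)"
    if "i \<le> r"
  proof -
    have "int (K+T-1-i) = int K + (int T - 1 - int i)" using assms(1,8) by (simp add: of_nat_diff)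
    then have "int ((K+T-1-i) div K) = (int T - 1 - int i) div int K + 1"
      using assms(1) by (simp add: zdiv_int div_add_self1)
    then show ?thesis using card_gasp_Lset_initial[OF assms(1,3,5) r assms(7) that assms(8)]
      by (simp add: min_def)
  qed
  show "card (gasp_Lset K L T r i) = L" if "r + 1 \<le> i"
    using card_gasp_Lset_later[OF assms(1,3,5) r] that by simp
  show "int (card (gasp_Rset K L T r i)) = max 0 (int K + int T - int K * int L - 1)" if "i = 1"
    using card_gasp_Rset_first[OF pos] that by (simp add: int_diff)
  show "int (card (gasp_Rset K L T r i)) = max 0 (int T - int K + int r - 1)"
    if "2 \<le> i \<and> i mod r = 1 mod r"
    using card_gasp_Rset_later[OF pos, of i] that r by (simp add: int_diff)
  show "card (gasp_Rset K L T r i) = T - 1" if "\<not> i mod r = 1 mod r"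
  proof -
    have "2 \<le> i" using that assms(7) by (cases "i = 1") auto
    then show ?thesis using card_gasp_Rset_later[OF pos] that by simp
  qed
qed

end
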